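(* Let $\beta>1$ and $C_\beta=2+\frac{2(\beta-1)^2}{2\beta-1}$. For all $x,y\in\mathbb{R}$, $$2\big(x|x|^{\beta-1}-y|y|^{\beta-1}\big)^2-C_\beta(x-y)\big(x|x|^{2(\beta-1)}-y|y|^{2(\beta-1)}\big)\le0.$$ *)

theory Defs
  imports Complex_Main
begin

end

theory Submission
  imports Defs
begin

text \<open>Write \<open>\<phi>\<^sub>a(t) = t |t|\<^sup>a\<close>, so that \<open>\<phi>\<^sub>a' = (a + 1) |t|\<^sup>a\<close>. With \<open>a = \<beta> - 1\<close> and
  \<open>f(t) = |t|\<^sup>a\<close>, the two differences in the claim are \<open>\<beta> \<integral>\<^sub>y\<^sup>x f\<close> and \<open>(2\<beta> - 1) \<integral>\<^sub>y\<^sup>x f\<^sup>2\<close>,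
  and \<open>C\<^sub>\<beta> = 2\<beta>\<^sup>2 / (2\<beta> - 1)\<close>. So the inequality is exactly the Cauchy-Schwarz inequality
  \<open>(\<integral>\<^sub>y\<^sup>x f)\<^sup>2 \<le> (x - y) \<integral>\<^sub>y\<^sup>x f\<^sup>2\<close>, which we prove for antiderivatives by monotonicity
  arguments instead of integrals.\<close>

lemma has_real_derivative_signed_powr:
  fixes a t :: real
  assumes "a > 0"
  shows "((\<lambda>s. s * \<bar>s\<bar> powr a) has_real_derivative (a + 1) * \<bar>t\<bar> powr a) (at t)"
proof -
  have pos: "((\<lambda>s. s * \<bar>s\<bar> powr a) has_real_derivative (a + 1) * \<bar>t\<bar> powr a) (at t)"
    if "t > 0" for t :: real
  proof (rule has_field_derivative_transform_within_open)
    show "((\<lambda>s. s powr (a + 1)) has_real_derivative (a + 1) * \<bar>t\<bar> powr a) (at t)"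
      using has_real_derivative_powr[OF \<open>t > 0\<close>, of "a + 1"] \<open>t > 0\<close> by simp
    show "s powr (a + 1) = s * \<bar>s\<bar> powr a" if "s \<in> {0<..}" for s :: real
      using that by (simp add: powr_add)
  qed (use \<open>t > 0\<close> in auto)
  consider "t > 0" | "t < 0" | "t = 0" by linarith
  then show ?thesis
  proof cases
    case 1
    then show ?thesis by (rule pos)
  next
    case 2
    have "((\<lambda>s. (- s) * \<bar>- s\<bar> powr a) has_real_derivative (a + 1) * \<bar>- t\<bar> powr a * (- 1)) (at t)"
      using 2 by (intro DERIV_chain2[OF pos] DERIV_minus DERIV_ident) simp
    then have "((\<lambda>s. - ((- s) * \<bar>- s\<bar> powr a)) has_real_derivative (a + 1) * \<bar>t\<bar> powr a) (at t)"
      using DERIV_minus by fastforce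
    then show ?thesis by simp
  next
    case 3
    have "((\<lambda>s. \<bar>s\<bar> powr a) \<longlongrightarrow> 0) (at (0::real))"
      by (rule tendsto_zero_powrI) (auto intro!: tendsto_eq_intros \<open>a > 0\<close>)
    then have "((\<lambda>s. (s * \<bar>s\<bar> powr a - 0 * \<bar>0\<bar> powr a) / (s - 0)) \<longlongrightarrow> 0) (at (0::real))"
      by (rule Lim_transform_within[OF _ zero_less_one]) auto
    then show ?thesis
      using 3 \<open>a > 0\<close> by (simp add: has_field_derivative_iff)
  qed
qed

text \<open>Expanded, this says \<open>\<integral>\<^sub>u\<^sup>v (f w - f v)\<^sup>2 dw \<ge> 0\<close>.\<close>
lemma antiderivative_deviation_nonneg:
  fixes F G f :: "real \<Rightarrow> real"
  assumes F': "\<And>t. (F has_real_derivative f t) (at t)"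
    and G': "\<And>t. (G has_real_derivative (f t)\<^sup>2) (at t)"
    and "u \<le> v"
  shows "2 * f v * (F v - F u) \<le> G v - G u + (v - u) * (f v)\<^sup>2"
proof -
  let ?D = "\<lambda>w. G v - G w + (v - w) * (f v)\<^sup>2 - 2 * f v * (F v - F w)"
  have "?D v \<le> ?D u"
  proof (rule deriv_nonpos_imp_antimono[where g = ?D and g' = "\<lambda>w. - (f w - f v)\<^sup>2"])
    fix w
    show "(?D has_real_derivative - (f w - f v)\<^sup>2) (at w)"
      by (auto intro!: derivative_eq_intros F' G' simp: power2_eq_square algebra_simps)
  qed (auto simp: \<open>u \<le> v\<close>)
  then show ?thesis by simp
qed

lemma antiderivative_cauchy_schwarz:
  fixes F G f :: "real \<Rightarrow> real"
  assumes F': "\<And>t. (F has_real_derivative f t) (at t)"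
    and G': "\<And>t. (G has_real_derivative (f t)\<^sup>2) (at t)"
  shows "(F x - F y)\<^sup>2 \<le> (x - y) * (G x - G y)"
proof -
  have ordered: "(F x - F y)\<^sup>2 \<le> (x - y) * (G x - G y)" if "y \<le> x" for x y
  proof -
    let ?H = "\<lambda>v. (v - y) * (G v - G y) - (F v - F y)\<^sup>2"
    let ?H' = "\<lambda>v. G v - G y + (v - y) * (f v)\<^sup>2 - 2 * f v * (F v - F y)"
    have "?H y \<le> ?H x"
    proof (rule deriv_nonneg_imp_mono[where g = ?H and g' = ?H'])
      fix w assume "w \<in> {y..x}"
      show "(?H has_real_derivative ?H' w) (at w)"
        by (auto intro!: derivative_eq_intros F' G' simp: power2_eq_square algebra_simps)
      show "0 \<le> ?H' w"
        using antiderivative_deviation_nonneg[OF F' G', of y w] \<open>w \<in> {y..x}\<close> by simp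
    qed (rule \<open>y \<le> x\<close>)
    then show ?thesis by simp
  qed
  show ?thesis
  proof (cases "y \<le> x")
    case False
    then have "(F y - F x)\<^sup>2 \<le> (y - x) * (G y - G x)" by (intro ordered) simp
    then show ?thesis by (simp add: power2_commute algebra_simps)
  qed (rule ordered)
qed

lemma signed_powr_cauchy_schwarz:
  fixes a x y :: real
  assumes "a > 0"
  shows "(2 * a + 1) * (x * \<bar>x\<bar> powr a - y * \<bar>y\<bar> powr a)\<^sup>2
         \<le> (a + 1)\<^sup>2 * (x - y) * (x * \<bar>x\<bar> powr (2 * a) - y * \<bar>y\<bar> powr (2 * a))"
proof -
  define F where "F t = t * \<bar>t\<bar> powr a / (a + 1)" for t :: real
  define G where "G t = t * \<bar>t\<bar> powr (2 * a) / (2 * a + 1)" for t :: real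
  have F': "(F has_real_derivative \<bar>t\<bar> powr a) (at t)" for t
    using DERIV_cdivide[OF has_real_derivative_signed_powr[OF \<open>a > 0\<close>], of "a + 1"] \<open>a > 0\<close>
    by (simp add: F_def[abs_def])
  have G': "(G has_real_derivative (\<bar>t\<bar> powr a)\<^sup>2) (at t)" for t
  proof -
    have "(\<bar>t\<bar> powr a)\<^sup>2 = \<bar>t\<bar> powr (2 * a)"
      by (simp add: powr_powr[symmetric] powr_realpow[symmetric] mult.commute)
    then show ?thesis
      using DERIV_cdivide[OF has_real_derivative_signed_powr[of "2 * a" t], of "2 * a + 1"] \<open>a > 0\<close>
      by (simp add: G_def[abs_def])
  qed
  have "(2 * a + 1) * ((a + 1) * (F x - F y))\<^sup>2 = (2 * a + 1) * (a + 1)\<^sup>2 * (F x - F y)\<^sup>2"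
    by (simp add: power_mult_distrib)
  also have "\<dots> \<le> (2 * a + 1) * (a + 1)\<^sup>2 * ((x - y) * (G x - G y))"
    using antiderivative_cauchy_schwarz[OF F' G', of x y] \<open>a > 0\<close> by (intro mult_left_mono) auto
  also have "\<dots> = (a + 1)\<^sup>2 * (x - y) * ((2 * a + 1) * (G x - G y))"
    by algebra
  finally have "(2 * a + 1) * ((a + 1) * (F x - F y))\<^sup>2 \<le> (a + 1)\<^sup>2 * (x - y) * ((2 * a + 1) * (G x - G y))" .
  moreover have "(a + 1) * (F x - F y) = x * \<bar>x\<bar> powr a - y * \<bar>y\<bar> powr a"
    using \<open>a > 0\<close> by (simp add: F_def right_diff_distrib)
  moreover have "(2 * a + 1) * (G x - G y) = x * \<bar>x\<bar> powr (2 * a) - y * \<bar>y\<bar> powr (2 * a)"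
    using \<open>a > 0\<close> by (simp add: G_def right_diff_distrib)
  ultimately show ?thesis by simp
qed

theorem lemmaB3:
  fixes \<beta> x y :: real
  assumes "\<beta> > 1"
  shows "2 * (x * \<bar>x\<bar> powr (\<beta> - 1) - y * \<bar>y\<bar> powr (\<beta> - 1))^2
         - (2 + 2 * (\<beta> - 1)^2 / (2 * \<beta> - 1)) * (x - y)
           * (x * \<bar>x\<bar> powr (2 * (\<beta> - 1)) - y * \<bar>y\<bar> powr (2 * (\<beta> - 1))) \<le> 0"
proof -
  define a where "a = \<beta> - 1"
  have "a > 0" using assms by (simp add: a_def)
  have C: "2 + 2 * (\<beta> - 1)\<^sup>2 / (2 * \<beta> - 1) = 2 * (a + 1)\<^sup>2 / (2 * a + 1)"
    using \<open>a > 0\<close> by (simp add: a_def field_simps power2_eq_square)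
  have "(x * \<bar>x\<bar> powr a - y * \<bar>y\<bar> powr a)\<^sup>2
        \<le> (a + 1)\<^sup>2 / (2 * a + 1) * (x - y) * (x * \<bar>x\<bar> powr (2 * a) - y * \<bar>y\<bar> powr (2 * a))"
    using signed_powr_cauchy_schwarz[OF \<open>a > 0\<close>, of x y] \<open>a > 0\<close>
    by (simp add: field_simps)
  then show ?thesis
    unfolding C by (simp add: a_def[symmetric])
qed

end
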